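(* Let $n\ge2$ be an integer that is not a perfect square, and let $a,b$ be positive rational numbers with $a^2-nb^2=1$. Put $u=a+b\sqrt n$ and for $k\ge1$ write $u^k=a_k+b_k\sqrt n$ with $a_k,b_k\in\mathbb Q$. Then $$\mathcal L\left(\frac1{u^2}\right)=\sum_{k=2}^{\infty}\mathcal L\left(\frac{1}{(b_k/b)^2}\right).$$ Moreover, if $a,b\in\mathbb Z$ then $b_k/b\in\mathbb Z$ for all $k\ge1$.
   Context: $\mathcal L$ is the Rogers dilogarithm: for real $z\le1$, $\mathcal L(z)=\mathrm{Li}_2(z)+\tfrac12\log|z|\log(1-z)$, where $\mathrm{Li}_2(z)=\sum_{m\ge1}z^m/m^2$. *)

theory Defs
  imports "HOL-Analysis.Analysis"
begin

definition Li2 :: "real \<Rightarrow> real" where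
  "Li2 z = (\<Sum>m. z ^ (Suc m) / (real (Suc m))^2)"

definition rogersL :: "real \<Rightarrow> real" where
  "rogersL z = Li2 z + 1/2 * ln \<bar>z\<bar> * ln (1 - z)"

end

(*
  Write q = 1/u^2. Since a - b sqrt n = 1/u, the quotient b_k/b equals (u^k - u^-k)/(u - u^-1),
  hence 1/(b_k/b)^2 = q^(k-1) (1-q)^2 / (1-q^k)^2. Abel's five-term relation for L, applied to
  x_j = q^(j+1) (1-q)/(1-q^(j+2)) and y_j = (1-q)/(1-q^(j+2)), gives L(x_j y_j) = F_j - F_(j+1)
  with F_j = L(x_j) + L(y_j), so the series telescopes to F_0 - lim F_j = L(1) - L(1-q) = L(q),
  both ends being evaluated by Euler's reflection formula L(z) + L(1-z) = L(1). The five-term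
  relation and the reflection formula are proved by differentiation, using
  L'(z) = -(ln(1-z)/z + ln z/(1-z))/2 on (0,1). Integrality of b_k/b follows from the recursion
  b_(k+1) = b a_k + a b_k.
*)
theory Submission
  imports Defs "HOL-Real_Asymp.Real_Asymp"
begin

lemma norm_Li2_term_le:
  "\<bar>w\<bar> \<le> 1 \<Longrightarrow> norm (1 / (real m)^2 * w ^ m) \<le> inverse (real m ^ 2)"
  by (simp add: abs_mult power_abs divide_inverse) (intro mult_left_le power_le_one, auto)

(* The term m = 0 vanishes because 1 / 0 = 0, so Li2 is the power series with coefficients 1/m^2. *)
lemma Li2_sums:
  assumes w: "\<bar>w\<bar> \<le> 1"
  shows "(\<lambda>m. 1 / (real m)^2 * w ^ m) sums Li2 w"
proof -
  have "summable (\<lambda>m. inverse (real m ^ 2))"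
    by (rule inverse_power_summable) simp
  moreover have "norm (1 / (real m)^2 * w ^ m) \<le> inverse (real m ^ 2)" for m
    using w by (rule norm_Li2_term_le)
  ultimately have "summable (\<lambda>m. 1 / (real m)^2 * w ^ m)"
    by (rule summable_comparison_test')
  then have "summable (\<lambda>m. 1 / (real (Suc m))^2 * w ^ Suc m)"
    by (subst summable_Suc_iff)
  then have "(\<lambda>m. 1 / (real (Suc m))^2 * w ^ Suc m) sums Li2 w"
    using summable_sums by (simp add: Li2_def)
  then show ?thesis by (subst (asm) sums_Suc_iff) simp
qed

lemma continuous_on_Li2: "continuous_on {-1..1} Li2"
proof -
  have lim: "uniform_limit {-1..1} (\<lambda>n z. \<Sum>i<n. 1 / (real i)^2 * z ^ i)
      (\<lambda>z. \<Sum>i. 1 / (real i)^2 * z ^ i) sequentially"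
  proof (rule Weierstrass_m_test)
    show "summable (\<lambda>m. inverse (real m ^ 2))"
      by (rule inverse_power_summable) simp
    fix n and z :: real assume "z \<in> {-1..1}"
    then show "norm (1 / (real n)^2 * z ^ n) \<le> inverse (real n ^ 2)"
      by (intro norm_Li2_term_le) auto
  qed
  have "continuous_on {-1..1} (\<lambda>z. \<Sum>i. 1 / (real i)^2 * z ^ i)"
    by (rule uniform_limit_theorem[OF _ lim])
       (intro always_eventually allI continuous_on_sum continuous_on_mult_left continuous_on_power
          continuous_on_id, simp)
  moreover have "(\<Sum>i. 1 / (real i)^2 * z ^ i) = Li2 z" if "z \<in> {-1..1}" for z
    using Li2_sums[of z] that by (simp add: sums_iff abs_le_iff)
  ultimately show ?thesis by (metis (no_types, lifting) continuous_on_cong)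
qed

lemma has_real_derivative_Li2:
  fixes z :: real assumes "\<bar>z\<bar> < 1" "z \<noteq> 0"
  shows "(Li2 has_real_derivative - ln (1 - z) / z) (at z)"
proof -
  have "((\<lambda>w. \<Sum>m. 1 / (real m)^2 * w ^ m) has_real_derivative
          (\<Sum>m. diffs (\<lambda>m. 1 / (real m)^2) m * z ^ m)) (at z)"
    by (rule termdiffs_strong'[where K = 1, OF sums_summable[OF Li2_sums]]) (use assms in auto)
  moreover have "(\<lambda>m. diffs (\<lambda>m. 1 / (real m)^2) m * z ^ m) sums (- ln (1 - z) / z)"
  proof -
    have "(\<lambda>m. z ^ m / real m) sums - ln (1 - z)"
      using ln_series'[of "-z"] assms(1) sums_minus by fastforce
    then have "(\<lambda>m. z ^ Suc m / real (Suc m)) sums - ln (1 - z)"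
      by (subst sums_Suc_iff) simp
    then have "(\<lambda>m. z ^ Suc m / real (Suc m) / z) sums (- ln (1 - z) / z)"
      by (rule sums_divide)
    then show ?thesis
      using assms(2) by (simp add: diffs_def power2_eq_square del: of_nat_Suc)
  qed
  ultimately have "((\<lambda>w. \<Sum>m. 1 / (real m)^2 * w ^ m) has_real_derivative - ln (1 - z) / z) (at z)"
    by (simp add: sums_iff)
  then show ?thesis
  proof (rule has_field_derivative_transform_within_open)
    show "(\<Sum>m. 1 / (real m)^2 * w ^ m) = Li2 w" if "w \<in> ball 0 1" for w
      using Li2_sums[of w] that by (simp add: sums_iff)
  qed (use assms in auto)
qed

definition rogersL' :: "real \<Rightarrow> real" where
  "rogersL' z = - (ln (1 - z) / z + ln z / (1 - z)) / 2"

lemma has_real_derivative_rogersL: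
  fixes z :: real assumes "0 < z" "z < 1"
  shows "(rogersL has_real_derivative rogersL' z) (at z)"
proof -
  have "((\<lambda>w. Li2 w + 1/2 * ln w * ln (1 - w)) has_real_derivative rogersL' z) (at z)"
    using assms by (auto intro!: derivative_eq_intros has_real_derivative_Li2
                         simp: rogersL'_def field_simps)
  then show ?thesis
  proof (rule has_field_derivative_transform_within_open)
    show "Li2 w + 1/2 * ln w * ln (1 - w) = rogersL w" if "w \<in> {0<..<1}" for w
      using that by (simp add: rogersL_def)
  qed (use assms in auto)
qed

lemma rogersL_0 [simp]: "rogersL 0 = 0"
  by (simp add: rogersL_def Li2_def)

lemma continuous_on_rogersL: "continuous_on {0..1} rogersL"
proof -
  have "continuous_on {0..1} (\<lambda>z::real. ln \<bar>z\<bar> * ln (1 - z))"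
  proof (rule continuous_on_eq_continuous_within[THEN iffD2], intro ballI)
    fix z :: real assume z: "z \<in> {0..1}"
    consider "z = 0" | "z = 1" | "0 < z \<and> z < 1" using z by fastforce
    then show "continuous (at z within {0..1}) (\<lambda>z. ln \<bar>z\<bar> * ln (1 - z))"
    proof cases
      case 1
      have "((\<lambda>z::real. ln \<bar>z\<bar> * ln (1 - z)) \<longlongrightarrow> 0) (at 0)" by real_asymp
      then have "((\<lambda>z::real. ln \<bar>z\<bar> * ln (1 - z)) \<longlongrightarrow> 0) (at 0 within {0..1})"
        by (rule tendsto_within_subset) simp
      then show ?thesis using 1 by (simp add: continuous_within)
    next
      case 2
      have "((\<lambda>z::real. ln \<bar>z\<bar> * ln (1 - z)) \<longlongrightarrow> 0) (at_left 1)" by real_asymp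
      then have "((\<lambda>z::real. ln \<bar>z\<bar> * ln (1 - z)) \<longlongrightarrow> 0) (at 1 within {..1})"
        by (simp add: at_within_Iic_at_left)
      then have "((\<lambda>z::real. ln \<bar>z\<bar> * ln (1 - z)) \<longlongrightarrow> 0) (at 1 within {0..1})"
        by (rule tendsto_within_subset) auto
      then show ?thesis using 2 by (simp add: continuous_within)
    next
      case 3
      then have "continuous (at z) (\<lambda>z::real. ln \<bar>z\<bar> * ln (1 - z))"
        by (intro continuous_intros) auto
      then show ?thesis by (rule continuous_at_imp_continuous_within)
    qed
  qed
  moreover have "continuous_on {0..1} Li2"
    by (rule continuous_on_subset[OF continuous_on_Li2]) auto
  ultimately have "continuous_on {0..1} (\<lambda>z. Li2 z + 1/2 * (ln \<bar>z\<bar> * ln (1 - z)))"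
    by (intro continuous_on_add continuous_on_mult_left)
  then show ?thesis unfolding rogersL_def[abs_def] by (simp add: mult.assoc)
qed

lemma rogersL_reflection:
  assumes "0 \<le> z" "z \<le> 1"
  shows "rogersL z + rogersL (1 - z) = rogersL 1"
proof (cases "z = 0")
  case False
  have "continuous_on {0..1} (\<lambda>z. rogersL (1 - z))"
    by (rule continuous_on_compose2[OF continuous_on_rogersL]) (auto intro!: continuous_intros)
  then have "continuous_on {0..1} (\<lambda>z. rogersL z + rogersL (1 - z))"
    by (intro continuous_on_add continuous_on_rogersL)
  then have "continuous_on {0..z} (\<lambda>z. rogersL z + rogersL (1 - z))"
    by (rule continuous_on_subset) (use assms in auto)
  moreover have "((\<lambda>z. rogersL z + rogersL (1 - z)) has_real_derivative 0) (at x)"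
    if "0 < x" "x < z" for x
  proof -
    have "((\<lambda>z. 1 - z) has_real_derivative -1) (at x)"
      by (auto intro!: derivative_eq_intros)
    then have "((\<lambda>z. rogersL z + rogersL (1 - z))
        has_real_derivative rogersL' x + rogersL' (1 - x) * (-1)) (at x)"
      using that assms by (intro DERIV_add has_real_derivative_rogersL
                                 DERIV_chain2[OF has_real_derivative_rogersL]) auto
    moreover have "rogersL' x + rogersL' (1 - x) * (-1) = 0"
      by (simp add: rogersL'_def)
    ultimately show ?thesis by simp
  qed
  ultimately show ?thesis
    using DERIV_isconst_end[of 0 z "\<lambda>z. rogersL z + rogersL (1 - z)"] assms False by simp
qed simp

lemma five_term_arguments:
  fixes t y :: real assumes "0 < t" "t < 1" "0 < y" "y < 1"
  shows "0 < t * y" "t * y < 1"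
    and "0 < t * (1 - y) / (1 - t * y)" "t * (1 - y) / (1 - t * y) < 1"
    and "0 < y * (1 - t) / (1 - t * y)" "y * (1 - t) / (1 - t * y) < 1"
proof -
  show "0 < t * y" "t * y < 1"
    using assms mult_strict_mono[of t 1 y 1] by auto
  then show "0 < t * (1 - y) / (1 - t * y)" "t * (1 - y) / (1 - t * y) < 1"
    and "0 < y * (1 - t) / (1 - t * y)" "y * (1 - t) / (1 - t * y) < 1"
    using assms by (simp_all add: field_simps)
qed

lemma rogersL'_five_term:
  fixes t y :: real assumes "0 < t" "t < 1" "0 < y" "y < 1"
  shows "rogersL' t - y * rogersL' (t * y)
         - (1 - y) / (1 - t * y)^2 * rogersL' (t * (1 - y) / (1 - t * y))
         + y * (1 - y) / (1 - t * y)^2 * rogersL' (y * (1 - t) / (1 - t * y)) = 0"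
proof -
  define s where "s = 1 - t * y"
  have s: "0 < s" using five_term_arguments[OF assms] by (simp add: s_def)
  have compl: "1 - t * (1 - y) / s = (1 - t) / s" "1 - y * (1 - t) / s = (1 - y) / s"
    "1 - t * y = s"
    using s by (simp_all add: s_def field_simps)
  have logs: "ln (t * (1 - y) / s) = ln t + ln (1 - y) - ln s"
    "ln (y * (1 - t) / s) = ln y + ln (1 - t) - ln s"
    "ln ((1 - t) / s) = ln (1 - t) - ln s" "ln ((1 - y) / s) = ln (1 - y) - ln s"
    "ln (t * y) = ln t + ln y"
    using assms s by (simp_all add: ln_mult ln_div)
  \<comment> \<open>Keeping \<open>1 - t\<close>, \<open>1 - y\<close> atomic lets \<open>field_simps\<close> see the nonzero denominators.\<close>
  define r q where "r = 1 - t" and "q = 1 - y"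
  have "t \<noteq> 0" "r \<noteq> 0" "y \<noteq> 0" "q \<noteq> 0" "s \<noteq> 0"
    using assms s by (auto simp: r_def q_def)
  then show ?thesis
    unfolding compl(3) unfolding rogersL'_def compl logs
    unfolding r_def[symmetric] q_def[symmetric]
    by (simp add: field_simps power2_eq_square) (simp add: r_def q_def s_def algebra_simps)
qed

lemma rogersL_five_term:
  fixes x y :: real
  assumes x: "0 < x" "x < 1" and y: "0 < y" "y < 1"
  shows "rogersL x + rogersL y
    = rogersL (x * y) + rogersL (x * (1 - y) / (1 - x * y)) + rogersL (y * (1 - x) / (1 - x * y))"
proof -
  define X Y where "X t = t * (1 - y) / (1 - t * y)" and "Y t = y * (1 - t) / (1 - t * y)" for t
  define G where "G t = rogersL t + rogersL y - rogersL (t * y) - rogersL (X t) - rogersL (Y t)" for t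
  have den: "1 - t * y \<noteq> 0" if "t \<in> {0..x}" for t
    using that x y mult_strict_mono[of t 1 y 1] by (cases "t = 0") auto
  have range: "t * y \<in> {0..1} \<and> X t \<in> {0..1} \<and> Y t \<in> {0..1}" if "t \<in> {0..x}" for t
  proof (cases "t = 0")
    case False
    then show ?thesis
      using five_term_arguments[of t y] that x y by (auto simp: X_def Y_def)
  qed (use y in \<open>simp add: X_def Y_def\<close>)
  have "continuous_on {0..x} (\<lambda>t. t * y)" "continuous_on {0..x} X" "continuous_on {0..x} Y"
    using den unfolding X_def Y_def by (auto intro!: continuous_intros)
  then have "continuous_on {0..x} G"
    unfolding G_def using range x
    by (intro continuous_on_diff continuous_on_add continuous_on_const
          continuous_on_compose2[OF continuous_on_rogersL]) auto
  moreover have "(G has_real_derivative 0) (at t)" if t: "0 < t" "t < x" for t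
  proof -
    have t1: "t < 1" using t x by simp
    note args = five_term_arguments[OF t(1) t1 y]
    have dP: "((\<lambda>t. t * y) has_real_derivative y) (at t)"
      by (auto intro!: derivative_eq_intros)
    have dX: "(X has_real_derivative (1 - y) / (1 - t * y)^2) (at t)"
      unfolding X_def using args
      by (auto intro!: derivative_eq_intros simp: field_simps power2_eq_square)
    have dY: "(Y has_real_derivative - y * (1 - y) / (1 - t * y)^2) (at t)"
      unfolding Y_def using args
      by (auto intro!: derivative_eq_intros simp: field_simps power2_eq_square)
    have "(G has_real_derivative rogersL' t + 0 - rogersL' (t * y) * y
        - rogersL' (X t) * ((1 - y) / (1 - t * y)^2)
        - rogersL' (Y t) * (- y * (1 - y) / (1 - t * y)^2)) (at t)"
      unfolding G_def using args t t1
      by (intro DERIV_diff DERIV_add DERIV_const has_real_derivative_rogersL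
          DERIV_chain2[OF has_real_derivative_rogersL dP]
          DERIV_chain2[OF has_real_derivative_rogersL dX]
          DERIV_chain2[OF has_real_derivative_rogersL dY]) (auto simp: X_def Y_def)
    moreover have "rogersL' t + 0 - rogersL' (t * y) * y
        - rogersL' (X t) * ((1 - y) / (1 - t * y)^2)
        - rogersL' (Y t) * (- y * (1 - y) / (1 - t * y)^2) = 0"
      using rogersL'_five_term[OF t(1) t1 y]
      by (simp add: X_def Y_def diff_divide_distrib algebra_simps)
    ultimately show ?thesis by simp
  qed
  ultimately have "G x = G 0"
    by (intro DERIV_isconst_end[OF x(1)]) auto
  then show ?thesis by (simp add: G_def X_def Y_def)
qed

lemma five_term_telescoping_step:
  fixes p q :: real
  assumes p: "0 < p" "p < 1" and q: "0 < q" "q < 1"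
  defines "x \<equiv> p * (1 - q) / (1 - p * q)" and "y \<equiv> (1 - q) / (1 - p * q)"
  shows "0 < x" "x < 1" "0 < y" "y < 1"
    and "x * (1 - y) / (1 - x * y) = p * q * (1 - q) / (1 - p * q * q)"
    and "y * (1 - x) / (1 - x * y) = (1 - q) / (1 - p * q * q)"
proof -
  have pq: "p * q < q" "p * q * q < p * q"
    using mult_strict_right_mono[OF p(2) q(1)] mult_strict_left_mono[OF q(2), of "p * q"] p q
    by simp_all
  define u w r where "u = 1 - p * q" and "w = 1 - p * q * q" and "r = 1 - p"
  have "0 < u" "0 < w" "0 < r" "1 - q < u"
    unfolding u_def w_def r_def using pq p q by linarith+
  have xy: "x = p * y" "y = (1 - q) / u" by (simp_all add: x_def y_def u_def)
  have compl: "1 - y = q * r / u" "1 - x = r / u" "1 - x * y = r * w / u^2"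
    using \<open>0 < u\<close> unfolding xy
    by (simp_all add: field_simps power2_eq_square) (simp_all add: u_def w_def r_def algebra_simps)
  show "0 < y" "y < 1" using \<open>0 < u\<close> \<open>1 - q < u\<close> q by (simp_all add: xy)
  then show "0 < x" "x < 1" using p mult_strict_mono[of p 1 y 1] unfolding xy(1) by simp_all
  show "x * (1 - y) / (1 - x * y) = p * q * (1 - q) / (1 - p * q * q)"
    "y * (1 - x) / (1 - x * y) = (1 - q) / (1 - p * q * q)"
    unfolding compl w_def[symmetric] unfolding xy
    using \<open>0 < u\<close> \<open>0 < w\<close> \<open>0 < r\<close> by (simp_all add: field_simps power2_eq_square)
qed

lemma rogersL_telescoping_sums:
  fixes q :: real assumes q: "0 < q" "q < 1"
  shows "(\<lambda>j. rogersL (q^(j + 1) * (1 - q)^2 / (1 - q^(j + 2))^2)) sums rogersL q"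
proof -
  define x y where "x j = q^Suc j * (1 - q) / (1 - q^Suc j * q)"
    and "y j = (1 - q) / (1 - q^Suc j * q)" for j
  have p: "0 < q^Suc j" "q^Suc j < 1" for j
    using q power_Suc_less_one[OF q] by simp_all
  note step = five_term_telescoping_step[OF p q]
  have xy: "0 < x j" "x j < 1" "0 < y j" "y j < 1" for j
    using step(1-4)[of j] by (simp_all add: x_def y_def)
  define F where "F j = rogersL (x j) + rogersL (y j)" for j
  have "rogersL (x j * y j) = F j - F (Suc j)" for j
    using rogersL_five_term[OF xy[of j]] step(5,6)[of j]
    by (simp add: F_def x_def y_def mult_ac)
  moreover have "x j * y j = q^(j + 1) * (1 - q)^2 / (1 - q^(j + 2))^2" for j
    by (simp add: x_def y_def power2_eq_square mult_ac)
  moreover have "F \<longlonglongrightarrow> rogersL 0 + rogersL (1 - q)"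
  proof -
    have lim: "(\<lambda>j. q^Suc j) \<longlonglongrightarrow> 0"
      using LIMSEQ_power_zero[of q] q by (simp add: LIMSEQ_Suc)
    have "x \<longlonglongrightarrow> 0 * (1 - q) / (1 - 0 * q)" "y \<longlonglongrightarrow> (1 - q) / (1 - 0 * q)"
      unfolding x_def[abs_def] y_def[abs_def]
      by (intro tendsto_divide tendsto_diff tendsto_mult tendsto_const lim, simp)+
    then have x_lim: "x \<longlonglongrightarrow> 0" and y_lim: "y \<longlonglongrightarrow> 1 - q" by simp_all
    have "(\<lambda>j. rogersL (x j)) \<longlonglongrightarrow> rogersL 0" "(\<lambda>j. rogersL (y j)) \<longlonglongrightarrow> rogersL (1 - q)"
      by (rule continuous_on_tendsto_compose[OF continuous_on_rogersL x_lim]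
               continuous_on_tendsto_compose[OF continuous_on_rogersL y_lim];
          use xy q in \<open>auto simp: less_imp_le\<close>)+
    then show ?thesis unfolding F_def[abs_def] by (rule tendsto_add)
  qed
  then have "(\<lambda>j. F j - F (Suc j)) sums (F 0 - (rogersL 0 + rogersL (1 - q)))"
    by (rule telescope_sums')
  moreover have "F 0 - (rogersL 0 + rogersL (1 - q)) = rogersL q"
  proof -
    have "1 - x 0 = y 0"
      using q power_Suc_less_one[OF q, of 1] by (simp add: x_def y_def field_simps)
    then have "F 0 = rogersL 1"
      using rogersL_reflection[of "x 0"] xy[of 0] by (simp add: F_def)
    then show ?thesis
      using rogersL_reflection[of q] q by simp
  qed
  ultimately show ?thesis by simp
qed

lemma sqrt_of_nat_notin_Rats:
  assumes "\<not> (\<exists>m::nat. n = m^2)"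
  shows "sqrt (real n) \<notin> \<rat>"
proof
  assume "sqrt (real n) \<in> \<rat>"
  then obtain p q :: nat where "q \<noteq> 0" "\<bar>sqrt (real n)\<bar> = real p / real q" "coprime p q"
    by (rule Rats_abs_nat_div_natE)
  then have "(real p)^2 = (sqrt (real n) * real q)^2"
    by (simp add: field_simps)
  then have "real n * (real q)^2 = (real p)^2"
    by (simp add: power_mult_distrib)
  then have eq: "n * q^2 = p^2" by (metis of_nat_eq_iff of_nat_mult of_nat_power)
  then have "q^2 dvd p^2" by (metis dvd_triv_right)
  moreover have "coprime (q^2) (p^2)" using \<open>coprime p q\<close> by (simp add: coprime_commute)
  ultimately have "is_unit (q^2)" using coprime_absorb_left by blast
  then have "q = 1" by simp
  with eq assms show False by simp
qed

lemma inverse_lucas_quotient_squared: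
  fixes u :: real assumes "u > 1" "k \<ge> 1"
  shows "1 / ((u^k - (1/u)^k) / (u - 1/u))^2
    = (1/u^2)^(k - 1) * (1 - 1/u^2)^2 / (1 - (1/u^2)^k)^2"
proof -
  define q where "q = 1 / u^2"
  have "u \<noteq> 0" using assms by auto
  have "0 < q" "q < 1" using assms by (auto simp: q_def one_less_power)
  then have "q^k < 1" using assms(2) by (simp add: power_less_one_iff)
  have "q^k = 1 / (u^k)^2"
    by (simp add: q_def power_one_over mult.commute flip: power_mult)
  then have "u^k - (1/u)^k = u^k * (1 - q^k)"
    using \<open>u \<noteq> 0\<close> by (simp add: power_one_over field_simps power2_eq_square)
  moreover have "u^k = u * u^(k - 1)"
    using assms(2) by (simp flip: power_Suc)
  ultimately have num: "u^k - (1/u)^k = u * u^(k - 1) * (1 - q^k)" by metis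
  have den: "u - 1/u = u * (1 - q)"
    using \<open>u \<noteq> 0\<close> by (simp add: q_def field_simps power2_eq_square)
  have "1 / (u^(k - 1))^2 = q^(k - 1)"
    by (simp add: q_def power_one_over mult.commute flip: power_mult)
  moreover define A B C where "A = u^(k - 1)" and "B = 1 - q^k" and "C = 1 - q"
  moreover have "A \<noteq> 0" "B \<noteq> 0" "C \<noteq> 0"
    using \<open>u \<noteq> 0\<close> \<open>q < 1\<close> \<open>q^k < 1\<close> by (simp_all add: A_def B_def C_def)
  ultimately show ?thesis
    unfolding num den q_def[symmetric] A_def[symmetric] B_def[symmetric] C_def[symmetric]
    using \<open>u \<noteq> 0\<close> by (simp add: field_simps power2_eq_square)
qed

lemma of_rat_add_mult_irrational_cancel:
  assumes "r \<notin> \<rat>" "of_rat x1 + of_rat y1 * r = of_rat x2 + of_rat y2 * (r::real)"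
  shows "y1 = y2"
proof (rule ccontr)
  assume "y1 \<noteq> y2"
  with assms(2) have "r = of_rat ((x2 - x1) / (y1 - y2))"
    by (simp add: of_rat_diff of_rat_divide field_simps)
  with assms(1) show False by (simp add: Rats_def)
qed

primrec sqrt_pow_coeffs :: "rat \<Rightarrow> rat \<Rightarrow> nat \<Rightarrow> nat \<Rightarrow> rat \<times> rat" where
  "sqrt_pow_coeffs a b n 0 = (1, 0)"
| "sqrt_pow_coeffs a b n (Suc k) =
     (a * fst (sqrt_pow_coeffs a b n k) + of_nat n * b * snd (sqrt_pow_coeffs a b n k),
      b * fst (sqrt_pow_coeffs a b n k) + a * snd (sqrt_pow_coeffs a b n k))"

lemma power_sqrt_pow_coeffs:
  "(of_rat a + of_rat b * sqrt (real n))^k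
     = of_rat (fst (sqrt_pow_coeffs a b n k)) + of_rat (snd (sqrt_pow_coeffs a b n k)) * sqrt (real n)"
  "(of_rat a - of_rat b * sqrt (real n))^k
     = of_rat (fst (sqrt_pow_coeffs a b n k)) - of_rat (snd (sqrt_pow_coeffs a b n k)) * sqrt (real n)"
proof (induction k)
  case (Suc k)
  have n: "sqrt (real n) * sqrt (real n) = real n" by simp
  show "(of_rat a + of_rat b * sqrt (real n))^Suc k
     = of_rat (fst (sqrt_pow_coeffs a b n (Suc k)))
       + of_rat (snd (sqrt_pow_coeffs a b n (Suc k))) * sqrt (real n)"
    unfolding power_Suc Suc.IH(1) by (simp add: of_rat_add of_rat_mult algebra_simps n)
  show "(of_rat a - of_rat b * sqrt (real n))^Suc k
     = of_rat (fst (sqrt_pow_coeffs a b n (Suc k)))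
       - of_rat (snd (sqrt_pow_coeffs a b n (Suc k))) * sqrt (real n)"
    unfolding power_Suc Suc.IH(2) by (simp add: of_rat_add of_rat_mult of_rat_diff algebra_simps n)
qed simp_all

lemma sqrt_pow_coeffs_Ints:
  assumes "a \<in> \<int>" "b \<in> \<int>" "b \<noteq> 0"
  shows "fst (sqrt_pow_coeffs a b n k) \<in> \<int> \<and> snd (sqrt_pow_coeffs a b n k) / b \<in> \<int>"
proof (induction k)
  case (Suc k)
  have "fst (sqrt_pow_coeffs a b n (Suc k))
      = a * fst (sqrt_pow_coeffs a b n k) + of_nat n * b * b * (snd (sqrt_pow_coeffs a b n k) / b)"
    "snd (sqrt_pow_coeffs a b n (Suc k)) / b
      = fst (sqrt_pow_coeffs a b n k) + a * (snd (sqrt_pow_coeffs a b n k) / b)"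
    using assms(3) by (simp_all add: field_simps)
  with Suc assms show ?case by (metis Ints_add Ints_mult Ints_of_nat)
qed simp

lemma snd_sqrt_pow_coeffs_quotient:
  assumes "b \<noteq> 0" "n > 0"
  shows "of_rat (snd (sqrt_pow_coeffs a b n k) / b)
    = ((of_rat a + of_rat b * sqrt (real n))^k - (of_rat a - of_rat b * sqrt (real n))^k)
      / ((of_rat a + of_rat b * sqrt (real n)) - (of_rat a - of_rat b * sqrt (real n)))"
  using assms by (simp add: power_sqrt_pow_coeffs of_rat_divide field_simps)

lemma pell_unit:
  assumes "n > 0" "a > 0" "b > 0" "a^2 - of_nat n * b^2 = 1"
  shows "of_rat a - of_rat b * sqrt (real n) = 1 / (of_rat a + of_rat b * sqrt (real n))"
    and "of_rat a + of_rat b * sqrt (real n) > 1"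
proof -
  define u v where "u = of_rat a + of_rat b * sqrt (real n)"
    and "v = of_rat a - of_rat b * sqrt (real n)"
  have "u * v = of_rat (a^2 - of_nat n * b^2)"
    by (simp add: u_def v_def algebra_simps power2_eq_square of_rat_diff of_rat_mult)
  then have uv: "u * v = 1" using assms(4) by simp
  have "0 < u" "v < u" using assms(1-3) by (simp_all add: u_def v_def add_pos_pos)
  then show "v = 1 / u" using uv by (simp add: field_simps)
  have "1 < u * u" using \<open>0 < u\<close> \<open>v < u\<close> uv by (metis mult_strict_left_mono)
  then show "u > 1" using mult_le_one[of u u] \<open>0 < u\<close> by linarith
qed

theorem theorem3:
  fixes n :: nat and a b :: rat and A B :: "nat \<Rightarrow> rat"
  assumes "n \<ge> 2"
    and "\<not> (\<exists>m::nat. n = m^2)"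
    and "a > 0" and "b > 0"
    and "a^2 - of_nat n * b^2 = 1"
    and "\<And>k. k \<ge> 1 \<Longrightarrow>
           (of_rat a + of_rat b * sqrt (real n)) ^ k = of_rat (A k) + of_rat (B k) * sqrt (real n)"
  shows "((\<lambda>k. rogersL (1 / (of_rat (B (k+2) / b))^2))
           sums rogersL (1 / (of_rat a + of_rat b * sqrt (real n))^2))
         \<and> (a \<in> \<int> \<and> b \<in> \<int> \<longrightarrow> (\<forall>k\<ge>1. B k / b \<in> \<int>))"
proof -
  define u where "u = of_rat a + of_rat b * sqrt (real n)"
  have "n > 0" "b \<noteq> 0" using assms(1,4) by auto
  have u: "u > 1" "of_rat a - of_rat b * sqrt (real n) = 1 / u"
    using pell_unit[OF \<open>n > 0\<close> assms(3-5)] by (simp_all add: u_def)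
  have B: "B k = snd (sqrt_pow_coeffs a b n k)" if "k \<ge> 1" for k
    using assms(6)[OF that] power_sqrt_pow_coeffs(1)[of a b n k]
      of_rat_add_mult_irrational_cancel[OF sqrt_of_nat_notin_Rats[OF assms(2)]] by metis
  have "of_rat (B k / b) = (u^k - (1/u)^k) / (u - 1/u)" if "k \<ge> 1" for k
    using snd_sqrt_pow_coeffs_quotient[OF \<open>b \<noteq> 0\<close> \<open>n > 0\<close>, of a k] B[OF that] u(2)
    by (simp add: u_def)
  then have "rogersL (1 / (of_rat (B (j + 2) / b))^2)
      = rogersL ((1/u^2)^(j + 1) * (1 - 1/u^2)^2 / (1 - (1/u^2)^(j + 2))^2)" for j
    using inverse_lucas_quotient_squared[OF u(1), of "j + 2"] by simp
  moreover have "0 < 1/u^2" "1/u^2 < 1" using u(1) by (simp_all add: one_less_power)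
  ultimately have "(\<lambda>j. rogersL (1 / (of_rat (B (j + 2) / b))^2)) sums rogersL (1/u^2)"
    using rogersL_telescoping_sums[of "1/u^2"] by simp
  moreover have "B k / b \<in> \<int>" if "a \<in> \<int>" "b \<in> \<int>" "k \<ge> 1" for k
    using sqrt_pow_coeffs_Ints[OF that(1,2) \<open>b \<noteq> 0\<close>] B[OF that(3)] by simp
  ultimately show ?thesis by (simp add: u_def)
qed

end
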